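(* For $r\ge2$, let $H(r)$ be the graph constructed from two disjoint copies of $K_{r+2}$ by adding a matching of $r$ edges, each joining a vertex of the first copy to a vertex of the second copy. Then $\mathrm{Z}_-(H(r))=r$, $\overline{\mathrm{Z}}_-(H(r))=r+1$, and $z^-_0(H(r))=2r=\overline{\mathrm{Z}}_-(H(r))+r-1$.
   Context: All graphs are finite, simple, undirected. Skew color change rule: with $W$ the set of white (non-blue) vertices, any vertex $u$ (blue or white) may color a white vertex $w$ blue if $N(u)\cap W=\{w\}$. $S$ is a skew forcing set if starting with exactly $S$ blue and applying the rule repeatedly, all vertices become blue. $\mathrm{Z}_-(G)$ is the minimum cardinality of a skew forcing set and $\overline{\mathrm{Z}}_-(G)$ the maximum cardinality of an inclusion-minimal skew forcing set. $\mathfrak{Z}^-(G)$ has as vertices the skew forcing sets, with $S_1S_2$ an edge iff $|S_1\ominus S_2|=1$; $\mathfrak{Z}^-_k(G)$ is its subgraph induced by skew forcing sets of size at most $k$. $z^-_0(G)$ is the least $k_0$ such that $\mathfrak{Z}^-_k(G)$ is connected for all $k\ge k_0$. *)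

theory Defs
  imports Main
begin

text \<open>A finite simple graph is given by a vertex set V and a symmetric irreflexive
  adjacency relation E (only its restriction to V matters).\<close>

definition nbhd :: "'a set \<Rightarrow> ('a \<Rightarrow> 'a \<Rightarrow> bool) \<Rightarrow> 'a \<Rightarrow> 'a set" where
  "nbhd V E u = {x \<in> V. E u x}"

text \<open>One application of the skew color change rule: with white set W = V - B,
  any vertex u (blue or white) with N(u) \<inter> W = {w} colors w blue.\<close>
definition skew_step :: "'a set \<Rightarrow> ('a \<Rightarrow> 'a \<Rightarrow> bool) \<Rightarrow> 'a set \<Rightarrow> 'a set \<Rightarrow> bool" where
  "skew_step V E B B' \<longleftrightarrow>
     (\<exists>u\<in>V. \<exists>w\<in>V - B. nbhd V E u \<inter> (V - B) = {w} \<and> B' = insert w B)"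

definition skew_forcing_set :: "'a set \<Rightarrow> ('a \<Rightarrow> 'a \<Rightarrow> bool) \<Rightarrow> 'a set \<Rightarrow> bool" where
  "skew_forcing_set V E S \<longleftrightarrow> S \<subseteq> V \<and> (skew_step V E)\<^sup>*\<^sup>* S V"

definition minimal_skew_forcing_set :: "'a set \<Rightarrow> ('a \<Rightarrow> 'a \<Rightarrow> bool) \<Rightarrow> 'a set \<Rightarrow> bool" where
  "minimal_skew_forcing_set V E S \<longleftrightarrow>
     skew_forcing_set V E S \<and> (\<forall>T. T \<subset> S \<longrightarrow> \<not> skew_forcing_set V E T)"

definition Z_minus :: "'a set \<Rightarrow> ('a \<Rightarrow> 'a \<Rightarrow> bool) \<Rightarrow> nat" where
  "Z_minus V E = Min (card ` {S. skew_forcing_set V E S})"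

definition Z_minus_bar :: "'a set \<Rightarrow> ('a \<Rightarrow> 'a \<Rightarrow> bool) \<Rightarrow> nat" where
  "Z_minus_bar V E = Max (card ` {S. minimal_skew_forcing_set V E S})"

definition sym_diff :: "'a set \<Rightarrow> 'a set \<Rightarrow> 'a set" where
  "sym_diff A B = (A - B) \<union> (B - A)"

definition skew_TAR_vertices :: "'a set \<Rightarrow> ('a \<Rightarrow> 'a \<Rightarrow> bool) \<Rightarrow> nat \<Rightarrow> 'a set set" where
  "skew_TAR_vertices V E k = {S. skew_forcing_set V E S \<and> card S \<le> k}"

definition skew_TAR_adj :: "'a set \<Rightarrow> ('a \<Rightarrow> 'a \<Rightarrow> bool) \<Rightarrow> nat \<Rightarrow> 'a set \<Rightarrow> 'a set \<Rightarrow> bool" where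
  "skew_TAR_adj V E k S1 S2 \<longleftrightarrow>
     S1 \<in> skew_TAR_vertices V E k \<and> S2 \<in> skew_TAR_vertices V E k \<and> card (sym_diff S1 S2) = 1"

definition skew_TAR_connected :: "'a set \<Rightarrow> ('a \<Rightarrow> 'a \<Rightarrow> bool) \<Rightarrow> nat \<Rightarrow> bool" where
  "skew_TAR_connected V E k \<longleftrightarrow>
     (\<forall>S1\<in>skew_TAR_vertices V E k. \<forall>S2\<in>skew_TAR_vertices V E k. (skew_TAR_adj V E k)\<^sup>*\<^sup>* S1 S2)"

definition z_minus_0 :: "'a set \<Rightarrow> ('a \<Rightarrow> 'a \<Rightarrow> bool) \<Rightarrow> nat" where
  "z_minus_0 V E = (LEAST k0. \<forall>k\<ge>k0. skew_TAR_connected V E k)"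

text \<open>H(r): two copies {0} \<times> {0..r+1} and {1} \<times> {0..r+1} of K_{r+2}, plus the
  matching (0,a)--(1,a) for a < r.\<close>
definition H_vertices :: "nat \<Rightarrow> (nat \<times> nat) set" where
  "H_vertices r = {0, 1} \<times> {0..r+1}"

definition H_edge :: "nat \<Rightarrow> nat \<times> nat \<Rightarrow> nat \<times> nat \<Rightarrow> bool" where
  "H_edge r x y \<longleftrightarrow>
     (fst x = fst y \<and> snd x \<noteq> snd y) \<or> (fst x \<noteq> fst y \<and> snd x = snd y \<and> snd x < r)"

end

theory Submission
  imports Defs
begin

text \<open>In \<open>H(r)\<close> a vertex sees its whole clique and possibly its matching partner. Hence \<open>S\<close> is
  skew forcing iff on some side at most one vertex is white, or exactly two are white and one of
  them has no white partner: that side is then forced, after which the matched white vertices of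
  the other side are forced by their partners and its last two white vertices by each other. If no
  side has this property, no vertex sees exactly one white vertex.

  So a forcing set leaves at most \<open>2 + (r + 2)\<close> vertices white, whence \<open>Z\<^sub>- = r\<close>; a forcing set of
  size \<open>\<ge> r + 2\<close> always has a redundant vertex on the other side, and
  \<open>{(1, 0)} \<union> {0} \<times> {2..r+1}\<close> is minimal of size \<open>r + 1\<close>. For \<open>k \<ge> 2r\<close> every forcing set of size
  \<open>\<le> k\<close> is joined by token moves to a full side, and the two sides are joined through the union of
  their matched halves. For \<open>k = 2r - 1\<close> a forcing set leaves at least five vertices white, so
  "side 0 has at most two white vertices" is invariant under token moves and separates the two
  matched halves.\<close>

section \<open>Monotonicity of skew forcing and token-addition paths\<close>

lemma skew_step_superset:
  assumes "skew_step V E S S'" "S \<subseteq> T"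
  shows "T \<union> S' = T \<or> skew_step V E T (T \<union> S')"
proof -
  obtain u w where u: "u \<in> V" and w: "w \<in> V - S" and N: "nbhd V E u \<inter> (V - S) = {w}"
    and S': "S' = insert w S"
    using assms(1) unfolding skew_step_def by blast
  show ?thesis
  proof (cases "w \<in> T")
    case False
    then have "nbhd V E u \<inter> (V - T) = {w}" using N w assms(2) by blast
    then show ?thesis using u w False S' assms(2) unfolding skew_step_def by blast
  qed (use S' assms(2) in auto)
qed

lemma skew_forcing_set_superset:
  assumes "skew_forcing_set V E S" "S \<subseteq> T" "T \<subseteq> V"
  shows "skew_forcing_set V E T"
proof -
  have "(skew_step V E)\<^sup>*\<^sup>* S V" using assms(1) unfolding skew_forcing_set_def by simp
  then have "(skew_step V E)\<^sup>*\<^sup>* T V" using assms(2,3)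
  proof (induction arbitrary: T rule: converse_rtranclp_induct)
    case base
    then have "T = V" by blast
    then show ?case using rtranclp.rtrancl_refl by metis
  next
    case (step S S')
    have "S' \<subseteq> V" using step.hyps(1) step.prems unfolding skew_step_def by blast
    then have IH: "(skew_step V E)\<^sup>*\<^sup>* (T \<union> S') V"
      using step.prems by (intro step.IH) auto
    from skew_step_superset[OF step.hyps(1) step.prems(1)] show ?case
    proof
      assume "T \<union> S' = T"
      with IH show ?thesis by simp
    next
      assume "skew_step V E T (T \<union> S')"
      then show ?thesis using IH by (rule converse_rtranclp_into_rtranclp)
    qed
  qed
  then show ?thesis using assms(3) unfolding skew_forcing_set_def by simp
qed

lemma skew_TAR_adj_sym: "skew_TAR_adj V E k S T \<Longrightarrow> skew_TAR_adj V E k T S"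
  unfolding skew_TAR_adj_def sym_diff_def by (simp add: Un_commute)

lemma skew_TAR_path_sym:
  "(skew_TAR_adj V E k)\<^sup>*\<^sup>* S T \<Longrightarrow> (skew_TAR_adj V E k)\<^sup>*\<^sup>* T S"
  by (induction rule: rtranclp_induct)
    (auto intro: converse_rtranclp_into_rtranclp skew_TAR_adj_sym)

lemma sym_diff_singleton_Diff_eq: "sym_diff S S' = {v} \<Longrightarrow> v \<notin> A \<Longrightarrow> A - S = A - S'"
  unfolding sym_diff_def by auto

lemma skew_TAR_adj_insert:
  assumes "finite V" "skew_forcing_set V E S" "v \<in> V - S" "card (insert v S) \<le> k"
  shows "skew_TAR_adj V E k S (insert v S)"
proof -
  have "S \<subseteq> V" using assms(2) unfolding skew_forcing_set_def by simp
  then have "finite S" using assms(1) by (rule finite_subset)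
  moreover have "sym_diff S (insert v S) = {v}" using assms(3) unfolding sym_diff_def by auto
  moreover have "skew_forcing_set V E (insert v S)"
    using skew_forcing_set_superset assms(2,3) \<open>S \<subseteq> V\<close> by blast
  ultimately show ?thesis using assms(2,3,4)
    unfolding skew_TAR_adj_def skew_TAR_vertices_def by (simp add: card_insert_if)
qed

lemma skew_TAR_path_superset:
  assumes "finite V" "skew_forcing_set V E S" "S \<subseteq> T" "T \<subseteq> V" "card T \<le> k"
  shows "(skew_TAR_adj V E k)\<^sup>*\<^sup>* S T"
proof -
  have "(skew_TAR_adj V E k)\<^sup>*\<^sup>* S (S \<union> D)"
    if "finite D" "S \<union> D \<subseteq> V" "card (S \<union> D) \<le> k" for D
    using that
  proof (induction D rule: finite_induct)
    case (insert d D)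
    have "card (S \<union> D) \<le> card (S \<union> insert d D)"
      using insert.prems(1) assms(1) by (intro card_mono) (auto intro: finite_subset)
    then have path: "(skew_TAR_adj V E k)\<^sup>*\<^sup>* S (S \<union> D)" using insert by simp
    show ?case
    proof (cases "d \<in> S \<union> D")
      case False
      have "skew_forcing_set V E (S \<union> D)"
        using skew_forcing_set_superset assms(2) insert.prems(1) by blast
      then have "skew_TAR_adj V E k (S \<union> D) (insert d (S \<union> D))"
        using False insert.prems assms(1) by (intro skew_TAR_adj_insert) auto
      then show ?thesis using path by simp
    qed (use path in \<open>simp add: insert_absorb\<close>)
  qed simp
  moreover have "finite (T - S)" using assms(1,4) by (meson finite_Diff finite_subset)
  moreover have "S \<union> (T - S) = T" using assms(3) by blast
  ultimately show ?thesis using assms(4,5) by metis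
qed

section \<open>Skew forcing sets of \<open>H(r)\<close>\<close>

abbreviation H_forcing :: "nat \<Rightarrow> (nat \<times> nat) set \<Rightarrow> bool" where
  "H_forcing r \<equiv> skew_forcing_set (H_vertices r) (H_edge r)"

definition H_side :: "nat \<Rightarrow> nat \<Rightarrow> (nat \<times> nat) set" where
  "H_side r i = {i} \<times> {0..r+1}"

text \<open>\<open>(1 - i, snd x)\<close> is the matching partner of \<open>x\<close> when \<open>snd x < r\<close>; for \<open>snd x \<ge> r\<close> there is none.\<close>
definition forcing_side :: "nat \<Rightarrow> (nat \<times> nat) set \<Rightarrow> nat \<Rightarrow> bool" where
  "forcing_side r S i \<longleftrightarrow> card (H_side r i - S) \<le> 1 \<or>
     (card (H_side r i - S) = 2 \<and> (\<exists>x\<in>H_side r i - S. r \<le> snd x \<or> (1 - i, snd x) \<in> S))"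

lemma H_vertices_eq_sides: "H_vertices r = H_side r 0 \<union> H_side r 1"
  unfolding H_vertices_def H_side_def by auto

lemma finite_H_side [simp]: "finite (H_side r i)"
  unfolding H_side_def by simp

lemma card_H_side [simp]: "card (H_side r i) = r + 2"
  unfolding H_side_def by (simp add: card_cartesian_product)

lemma H_side_disjoint: "i \<noteq> j \<Longrightarrow> H_side r i \<inter> H_side r j = {}"
  unfolding H_side_def by auto

lemma finite_H_vertices [simp]: "finite (H_vertices r)"
  unfolding H_vertices_eq_sides by simp

lemma H_side_subset: "i \<le> 1 \<Longrightarrow> H_side r i \<subseteq> H_vertices r"
  unfolding H_vertices_eq_sides by (cases i) auto

lemma card_H_white:
  assumes "i \<le> 1"
  shows "card (H_vertices r - S) = card (H_side r i - S) + card (H_side r (1 - i) - S)"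
proof -
  have "H_vertices r - S = (H_side r i - S) \<union> (H_side r (1 - i) - S)"
    using assms unfolding H_vertices_eq_sides by (cases i) auto
  moreover have "(H_side r i - S) \<inter> (H_side r (1 - i) - S) = {}"
    using H_side_disjoint[of i "1 - i" r] assms by (cases i) auto
  ultimately show ?thesis by (simp add: card_Un_disjoint)
qed

lemma card_H_blue_white:
  assumes "S \<subseteq> H_vertices r"
  shows "card S + card (H_vertices r - S) = 2 * r + 4"
proof -
  have "card (H_vertices r) = 2 * r + 4"
    using card_H_white[of 0 r "{}"] by simp
  moreover have "finite S" using assms by (rule finite_subset) simp
  then have "card (H_vertices r - S) = card (H_vertices r) - card S"
    using assms by (rule card_Diff_subset)
  moreover have "card S \<le> card (H_vertices r)" by (rule card_mono[OF finite_H_vertices assms])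
  ultimately show ?thesis by linarith
qed

lemma nbhd_H_white:
  assumes "i \<le> 1" "a \<le> r + 1"
  shows "nbhd (H_vertices r) (H_edge r) (i, a) \<inter> (H_vertices r - S)
     = (H_side r i - S - {(i, a)}) \<union> (if a < r \<and> (1 - i, a) \<notin> S then {(1 - i, a)} else {})"
proof -
  have "i = 0 \<or> i = 1" using assms by auto
  then show ?thesis
    using assms unfolding nbhd_def H_vertices_def H_edge_def H_side_def by auto
qed

lemma H_no_skew_step:
  assumes "\<not> (\<exists>i\<le>1. forcing_side r S i)"
  shows "\<not> skew_step (H_vertices r) (H_edge r) S S'"
proof
  assume "skew_step (H_vertices r) (H_edge r) S S'"
  then obtain u w where u: "u \<in> H_vertices r" and w: "w \<in> H_vertices r - S"
    and N: "nbhd (H_vertices r) (H_edge r) u \<inter> (H_vertices r - S) = {w}"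
    unfolding skew_step_def by blast
  obtain i a where ua: "u = (i, a)" and i: "i \<le> 1" and a: "a \<le> r + 1"
    using u unfolding H_vertices_def by auto
  have not_forcing: "\<not> forcing_side r S i" using assms i by blast
  note N = N[unfolded ua nbhd_H_white[OF i a]]
  have white_sub: "H_side r i - S \<subseteq> {u, w}"
    using N ua by blast
  have "card {u, w} \<le> 2" by (cases "u = w") auto
  then have "card (H_side r i - S) \<le> 2" using card_mono[OF _ white_sub] by simp
  with not_forcing have two: "card (H_side r i - S) = 2"
    unfolding forcing_side_def by auto
  have "u \<noteq> w"
  proof
    assume "u = w"
    then have "card (H_side r i - S) \<le> 1" using card_mono[OF _ white_sub] by simp
    then show False using two by simp
  qed
  then have white_eq: "H_side r i - S = {u, w}" using card_subset_eq[OF _ white_sub] two by simp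
  then have "u \<notin> S" "w \<in> H_side r i" by auto
  with not_forcing two white_eq \<open>u \<noteq> w\<close> ua have "a < r \<and> (1 - i, a) \<notin> S"
    unfolding forcing_side_def by auto
  then have "w = (1 - i, a)" using N by auto
  then have "1 - i = i" using \<open>w \<in> H_side r i\<close> unfolding H_side_def by auto
  with i show False by arith
qed

lemma forcing_side_mono:
  assumes "forcing_side r S i" "S \<subseteq> S'"
  shows "forcing_side r S' i"
proof -
  have sub: "H_side r i - S' \<subseteq> H_side r i - S" using assms(2) by auto
  show ?thesis
  proof (cases "card (H_side r i - S) \<le> 1")
    case True
    then show ?thesis using card_mono[OF _ sub] unfolding forcing_side_def by simp
  next
    case False
    then obtain x where two: "card (H_side r i - S) = 2" and x: "x \<in> H_side r i - S"
      and free: "r \<le> snd x \<or> (1 - i, snd x) \<in> S"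
      using assms(1) unfolding forcing_side_def by auto
    show ?thesis
    proof (cases "x \<in> S'")
      case True
      then have "H_side r i - S' \<subseteq> (H_side r i - S) - {x}" using sub by auto
      then have "card (H_side r i - S') \<le> 1"
        using card_mono[of "(H_side r i - S) - {x}"] two x by fastforce
      then show ?thesis unfolding forcing_side_def by simp
    next
      case False
      then show ?thesis
        using card_mono[OF _ sub] two x free assms(2) unfolding forcing_side_def by auto
    qed
  qed
qed

lemma skew_step_H_intro:
  assumes "u \<in> H_vertices r" "w \<in> H_vertices r - S"
    "nbhd (H_vertices r) (H_edge r) u \<inter> (H_vertices r - S) = {w}"
  shows "\<exists>w \<in> H_vertices r - S. skew_step (H_vertices r) (H_edge r) S (insert w S)"
  using assms unfolding skew_step_def by blast

lemma forcing_side_skew_step: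
  assumes "forcing_side r S i" "i \<le> 1" "H_side r i - S \<noteq> {}"
  shows "\<exists>w \<in> H_vertices r - S. skew_step (H_vertices r) (H_edge r) S (insert w S)"
proof (cases "card (H_side r i - S) \<le> 1")
  case True
  then have "card (H_side r i - S) = 1"
    using assms(3) by (simp add: card_gt_0_iff Suc_le_eq le_antisym)
  then obtain w where white: "H_side r i - S = {w}" by (rule card_1_singletonE)
  \<comment> \<open>one of the two unmatched vertices of side \<open>i\<close> other than \<open>w\<close> forces \<open>w\<close>\<close>
  define b where "b = (if snd w = r then r + 1 else r)"
  have b: "b \<le> r + 1" "\<not> b < r" "(i, b) \<noteq> w" unfolding b_def by (cases w; auto)+
  have "(i, b) \<in> H_side r i" using b unfolding H_side_def by auto
  then have "(i, b) \<in> H_vertices r" using H_side_subset[OF assms(2)] by blast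
  moreover have "nbhd (H_vertices r) (H_edge r) (i, b) \<inter> (H_vertices r - S) = {w}"
    unfolding nbhd_H_white[OF assms(2) b(1)] using white b by auto
  ultimately show ?thesis using white H_side_subset[OF assms(2)] by (intro skew_step_H_intro) auto
next
  case False
  then obtain x where two: "card (H_side r i - S) = 2" and x: "x \<in> H_side r i - S"
    and free: "r \<le> snd x \<or> (1 - i, snd x) \<in> S"
    using assms(1) unfolding forcing_side_def by auto
  obtain y where white: "H_side r i - S = {x, y}" and "x \<noteq> y"
    using two x by (metis card_2_iff doubleton_eq_iff insertE singletonD)
  have x_eq: "x = (i, snd x)" and "snd x \<le> r + 1" using x unfolding H_side_def by auto
  then have "nbhd (H_vertices r) (H_edge r) x \<inter> (H_vertices r - S) = {y}"
    using nbhd_H_white[OF assms(2), of "snd x" r S] white \<open>x \<noteq> y\<close> free by auto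
  then show ?thesis using white x H_side_subset[OF assms(2)] by (intro skew_step_H_intro) auto
qed

lemma H_skew_step_exists:
  assumes forcing: "\<exists>i\<le>1. forcing_side r S i"
    and "S \<subseteq> H_vertices r" "S \<noteq> H_vertices r"
  shows "\<exists>w \<in> H_vertices r - S. skew_step (H_vertices r) (H_edge r) S (insert w S)"
proof -
  obtain i where i: "i \<le> 1" "forcing_side r S i" using forcing by blast
  show ?thesis
  proof (cases "H_side r i - S = {}")
    case False
    then show ?thesis using forcing_side_skew_step i by blast
  next
    case True
    define j where "j = 1 - i"
    have j: "j \<le> 1" "1 - j = i" using i unfolding j_def by auto
    have white: "H_vertices r - S = H_side r j - S"
      using True i unfolding H_vertices_eq_sides j_def by (cases i) auto
    then have "H_side r j - S \<noteq> {}" using assms(2,3) by auto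
    show ?thesis
    proof (cases "\<exists>w \<in> H_side r j - S. snd w < r")
      case True
      \<comment> \<open>a matched white vertex is forced by its partner on the all-blue side \<open>i\<close>\<close>
      then obtain w where w: "w \<in> H_side r j - S" "snd w < r" by auto
      then have "w = (j, snd w)" unfolding H_side_def by auto
      then have "nbhd (H_vertices r) (H_edge r) (i, snd w) \<inter> (H_vertices r - S) = {w}"
        using nbhd_H_white[OF i(1), of "snd w" r S] \<open>H_side r i - S = {}\<close> w j_def by auto
      moreover have "(i, snd w) \<in> H_side r i" using w unfolding H_side_def by auto
      then have "(i, snd w) \<in> H_vertices r" using H_side_subset[OF i(1)] by blast
      ultimately show ?thesis using white w by (intro skew_step_H_intro) auto
    next
      case False
      have "H_side r j - S \<subseteq> {(j, r), (j, r + 1)}"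
      proof
        fix x assume x: "x \<in> H_side r j - S"
        with False have "r \<le> snd x" by (meson not_less)
        with x show "x \<in> {(j, r), (j, r + 1)}" unfolding H_side_def by auto
      qed
      then have "card (H_side r j - S) \<le> card {(j, r), (j, r + 1)}" by (intro card_mono) auto
      then have "card (H_side r j - S) \<le> 2" by simp
      then have "card (H_side r j - S) \<le> 1 \<or> card (H_side r j - S) = 2" by linarith
      moreover obtain x where x: "x \<in> H_side r j - S" using \<open>H_side r j - S \<noteq> {}\<close> by blast
      moreover from x False have "r \<le> snd x" by (meson not_less)
      ultimately have "forcing_side r S j" unfolding forcing_side_def by blast
      then show ?thesis using forcing_side_skew_step j(1) \<open>H_side r j - S \<noteq> {}\<close> by blast
    qed
  qed
qed

lemma H_forcing_imp_forcing_side: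
  assumes "H_forcing r S"
  shows "\<exists>i\<le>1. forcing_side r S i"
proof (rule ccontr)
  assume stalled: "\<not> (\<exists>i\<le>1. forcing_side r S i)"
  have "(skew_step (H_vertices r) (H_edge r))\<^sup>*\<^sup>* S (H_vertices r)"
    using assms unfolding skew_forcing_set_def by simp
  then show False
  proof (cases rule: converse_rtranclpE)
    case base
    then have no_white: "card (H_side r 0 - S) = 0" using H_side_subset[of 0 r] by simp
    have "forcing_side r S 0" by (simp add: forcing_side_def no_white)
    with stalled show False by blast
  next
    case (step S')
    then show False using H_no_skew_step[OF stalled, of S'] by simp
  qed
qed

lemma forcing_side_imp_H_forcing:
  assumes "S \<subseteq> H_vertices r" "\<exists>i\<le>1. forcing_side r S i"
  shows "H_forcing r S"
proof -
  have "(skew_step (H_vertices r) (H_edge r))\<^sup>*\<^sup>* S (H_vertices r)"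
    if "card (H_vertices r - S) = n" "S \<subseteq> H_vertices r" "\<exists>i\<le>1. forcing_side r S i" for n S
    using that
  proof (induction n arbitrary: S rule: less_induct)
    case (less n S)
    show ?case
    proof (cases "S = H_vertices r")
      case False
      then obtain w where w: "w \<in> H_vertices r - S"
        and step: "skew_step (H_vertices r) (H_edge r) S (insert w S)"
        using H_skew_step_exists[OF less.prems(3,2)] by blast
      have "card (H_vertices r - insert w S) < n"
        using w less.prems(1) by (metis Diff_insert card_Diff1_less finite_Diff finite_H_vertices)
      moreover have "insert w S \<subseteq> H_vertices r" using w less.prems(2) by blast
      moreover have "\<exists>i\<le>1. forcing_side r (insert w S) i"
        using less.prems(3) forcing_side_mono[of r S _ "insert w S"] by blast
      ultimately have "(skew_step (H_vertices r) (H_edge r))\<^sup>*\<^sup>* (insert w S) (H_vertices r)"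
        using less.IH by blast
      with step show ?thesis by (rule converse_rtranclp_into_rtranclp)
    qed simp
  qed
  with assms show ?thesis unfolding skew_forcing_set_def by blast
qed

lemma H_skew_forcing_iff:
  "H_forcing r S \<longleftrightarrow> S \<subseteq> H_vertices r \<and> (\<exists>i\<le>1. forcing_side r S i)"
  using H_forcing_imp_forcing_side forcing_side_imp_H_forcing
  unfolding skew_forcing_set_def by blast

lemma card_white_of_H_forcing:
  assumes "H_forcing r S"
  shows "card (H_vertices r - S) \<le> r + 4"
proof -
  obtain i where i: "i \<le> 1" "forcing_side r S i" using assms H_skew_forcing_iff by blast
  have "card (H_side r i - S) \<le> 2" using i(2) unfolding forcing_side_def by auto
  moreover have "card (H_side r (1 - i) - S) \<le> r + 2"
    using card_mono[of "H_side r (1 - i)" "H_side r (1 - i) - S"] by simp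
  ultimately show ?thesis using card_H_white[OF i(1), of r S] by linarith
qed

definition H_matched_side :: "nat \<Rightarrow> nat \<Rightarrow> (nat \<times> nat) set" where
  "H_matched_side r i = {i} \<times> {0..<r}"

lemma H_matched_side:
  assumes "i \<le> 1"
  shows "H_forcing r (H_matched_side r i)" "card (H_matched_side r i) = r"
    "H_matched_side r i \<subseteq> H_side r i" "H_side r i - H_matched_side r i = {(i, r), (i, r + 1)}"
proof -
  show white: "H_side r i - H_matched_side r i = {(i, r), (i, r + 1)}"
    and sub: "H_matched_side r i \<subseteq> H_side r i"
    unfolding H_side_def H_matched_side_def by auto
  show "card (H_matched_side r i) = r"
    unfolding H_matched_side_def by (simp add: card_cartesian_product)
  have "forcing_side r (H_matched_side r i) i" unfolding forcing_side_def white by simp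
  moreover have "H_matched_side r i \<subseteq> H_vertices r" using sub H_side_subset[OF assms] by blast
  ultimately show "H_forcing r (H_matched_side r i)"
    unfolding H_skew_forcing_iff using assms by blast
qed

lemma Z_minus_H: "Z_minus (H_vertices r) (H_edge r) = r"
  unfolding Z_minus_def
proof (rule Min_eqI)
  have "{S. H_forcing r S} \<subseteq> Pow (H_vertices r)" unfolding skew_forcing_set_def by auto
  then show "finite (card ` {S. H_forcing r S})"
    by (meson finite_Pow_iff finite_H_vertices finite_imageI finite_subset)
next
  fix y assume "y \<in> card ` {S. H_forcing r S}"
  then obtain S where S: "H_forcing r S" "y = card S" by auto
  then have "S \<subseteq> H_vertices r" unfolding skew_forcing_set_def by simp
  with card_white_of_H_forcing[OF S(1)] card_H_blue_white[OF this] S(2) show "r \<le> y" by linarith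
next
  have "H_forcing r (H_matched_side r 0)" "card (H_matched_side r 0) = r"
    using H_matched_side[of 0 r] by simp_all
  then show "r \<in> card ` {S. H_forcing r S}"
    by (intro image_eqI[where x = "H_matched_side r 0"]) auto
qed

lemma card_H_side_Int: "card (H_side r j \<inter> S) = r + 2 - card (H_side r j - S)"
proof -
  have "card (H_side r j - S) = card (H_side r j) - card (H_side r j \<inter> S)"
    by (rule card_Diff_subset_Int) simp
  moreover have "card (H_side r j \<inter> S) \<le> card (H_side r j)" by (rule card_mono) auto
  ultimately show ?thesis by simp
qed

lemma forcing_side_remove_vertex:
  assumes i: "i \<le> 1" "forcing_side r S i"
    and blue: "card (H_side r i - S) \<le> card (H_side r (1 - i) \<inter> S)"
  shows "\<exists>v\<in>S. forcing_side r (S - {v}) i"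
proof -
  define j where "j = 1 - i"
  have "i \<noteq> j" using i(1) unfolding j_def by arith
  have same_white: "H_side r i - (S - {v}) = H_side r i - S" if "v \<in> H_side r j" for v
    using that H_side_disjoint[OF \<open>i \<noteq> j\<close>, of r] by blast
  show ?thesis
  proof (cases "card (H_side r i - S) \<le> 1")
    case small: True
    show ?thesis
    proof (cases "H_side r i \<subseteq> S")
      case True
      have "(i, 0) \<in> H_side r i" unfolding H_side_def by simp
      with True have v: "(i, 0) \<in> S" "H_side r i - (S - {(i, 0)}) = {(i, 0)}" by blast+
      have "forcing_side r (S - {(i, 0)}) i" unfolding forcing_side_def v(2) by simp
      with v(1) show ?thesis by blast
    next
      case False
      \<comment> \<open>any blue vertex of side \<open>j\<close> is redundant\<close>
      then have "card (H_side r i - S) \<noteq> 0" by simp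
      then have "H_side r j \<inter> S \<noteq> {}" using blue unfolding j_def by auto
      then obtain v where v: "v \<in> H_side r j" "v \<in> S" by blast
      have "forcing_side r (S - {v}) i"
        using small unfolding forcing_side_def same_white[OF v(1)] by simp
      with v(2) show ?thesis by blast
    qed
  next
    case False
    then obtain x where two: "card (H_side r i - S) = 2" and x: "x \<in> H_side r i - S"
      and free: "r \<le> snd x \<or> (j, snd x) \<in> S"
      using i(2) unfolding forcing_side_def j_def by auto
    \<comment> \<open>side \<open>j\<close> has at least two blue vertices, so one of them is not the partner of \<open>x\<close>\<close>
    have "\<not> H_side r j \<inter> S \<subseteq> {(j, snd x)}"
    proof
      assume "H_side r j \<inter> S \<subseteq> {(j, snd x)}"
      then have "card (H_side r j \<inter> S) \<le> 1" using card_mono[of "{(j, snd x)}"] by fastforce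
      then show False using blue two unfolding j_def by linarith
    qed
    then obtain v where v: "v \<in> H_side r j" "v \<in> S" "v \<noteq> (j, snd x)" by blast
    have "forcing_side r (S - {v}) i"
      unfolding forcing_side_def same_white[OF v(1)] using two x free v(3) unfolding j_def by auto
    with v(2) show ?thesis by blast
  qed
qed

lemma H_forcing_remove_vertex:
  assumes "H_forcing r S" "r + 2 \<le> card S"
  shows "\<exists>v\<in>S. H_forcing r (S - {v})"
proof -
  obtain i where i: "i \<le> 1" "forcing_side r S i" and sub: "S \<subseteq> H_vertices r"
    using assms(1) H_skew_forcing_iff by blast
  have "card (H_side r i - S) + card (H_side r (1 - i) - S) \<le> r + 2"
    using card_H_white[OF i(1), of r S] card_H_blue_white[OF sub] assms(2) by linarith
  then have "card (H_side r i - S) \<le> card (H_side r (1 - i) \<inter> S)"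
    using card_H_side_Int[of r "1 - i" S] by linarith
  then obtain v where "v \<in> S" "forcing_side r (S - {v}) i"
    using forcing_side_remove_vertex[OF i] by blast
  moreover have "S - {v} \<subseteq> H_vertices r" using sub by blast
  ultimately show ?thesis using i(1) unfolding H_skew_forcing_iff by blast
qed

lemma card_minimal_H_forcing_le:
  assumes "minimal_skew_forcing_set (H_vertices r) (H_edge r) S"
  shows "card S \<le> r + 1"
proof (rule ccontr)
  have forcing: "H_forcing r S" and minimal: "\<forall>T. T \<subset> S \<longrightarrow> \<not> H_forcing r T"
    using assms unfolding minimal_skew_forcing_set_def by blast+
  assume "\<not> card S \<le> r + 1"
  then have "r + 2 \<le> card S" by simp
  then obtain v where "v \<in> S" "H_forcing r (S - {v})"
    using H_forcing_remove_vertex[OF forcing] by blast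
  moreover have "S - {v} \<subset> S" using \<open>v \<in> S\<close> by blast
  ultimately show False using minimal by blast
qed

definition H_large_minimal :: "nat \<Rightarrow> (nat \<times> nat) set" where
  "H_large_minimal r = insert (1, 0) ({0} \<times> {2..r+1})"

lemma H_large_minimal_white0: "2 \<le> r \<Longrightarrow> H_side r 0 - H_large_minimal r = {(0, 0), (0, 1)}"
  unfolding H_side_def H_large_minimal_def by auto

lemma H_large_minimal_subset_not_forcing:
  assumes "2 \<le> r" "T \<subset> H_large_minimal r"
  shows "\<not> H_forcing r T"
proof
  \<comment> \<open>side 1 keeps at least \<open>r + 1\<close> white vertices; removing \<open>(1, 0)\<close> leaves \<open>(0, 0), (0, 1)\<close>
      white with white partners, removing anything else leaves three white vertices on side 0\<close>
  assume "H_forcing r T"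
  then obtain i where i: "i \<le> 1" "forcing_side r T i" using H_skew_forcing_iff by blast
  obtain v where v: "v \<in> H_large_minimal r" "v \<notin> T" using assms(2) by blast
  have "H_side r 1 - {(1, 0)} \<subseteq> H_side r 1 - T"
    using assms(2) unfolding H_large_minimal_def H_side_def by auto
  then have "r + 1 \<le> card (H_side r 1 - T)"
    using card_mono[of "H_side r 1 - T" "H_side r 1 - {(1, 0)}"] by (simp add: H_side_def)
  then have "\<not> forcing_side r T 1" using assms(1) unfolding forcing_side_def by auto
  moreover have "\<not> forcing_side r T 0"
  proof
    assume forcing0: "forcing_side r T 0"
    have sub0: "{(0, 0), (0, 1)} \<subseteq> H_side r 0 - T"
      using assms H_large_minimal_white0 by blast
    then have "2 \<le> card (H_side r 0 - T)" using card_mono[OF _ sub0] by simp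
    with forcing0 have "card (H_side r 0 - T) = 2"
      and partner: "\<exists>x\<in>H_side r 0 - T. r \<le> snd x \<or> (1, snd x) \<in> T"
      unfolding forcing_side_def by auto
    then have white0_T: "H_side r 0 - T = {(0, 0), (0, 1)}"
      using card_subset_eq[OF _ sub0] by simp
    then have "v \<notin> H_side r 0" using v H_large_minimal_white0[OF assms(1)] by blast
    then have "v = (1, 0)" using v(1) unfolding H_large_minimal_def H_side_def by auto
    moreover have "(1, 1) \<notin> T" using assms(2) unfolding H_large_minimal_def by auto
    moreover obtain x :: "nat \<times> nat" where "x \<in> {(0, 0), (0, 1)}" "r \<le> snd x \<or> (1, snd x) \<in> T"
      using partner unfolding white0_T by blast
    ultimately show False using v(2) assms(1) by auto
  qed
  moreover have "i = 0 \<or> i = 1" using i(1) by arith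
  ultimately show False using i(2) by blast
qed

lemma H_large_minimal:
  assumes "2 \<le> r"
  shows "minimal_skew_forcing_set (H_vertices r) (H_edge r) (H_large_minimal r)"
    "card (H_large_minimal r) = r + 1"
proof -
  have "forcing_side r (H_large_minimal r) 0"
    unfolding forcing_side_def H_large_minimal_white0[OF assms] by (simp add: H_large_minimal_def)
  moreover have "H_large_minimal r \<subseteq> H_vertices r"
    unfolding H_large_minimal_def H_vertices_def by auto
  ultimately have "H_forcing r (H_large_minimal r)"
    unfolding H_skew_forcing_iff by blast
  then show "minimal_skew_forcing_set (H_vertices r) (H_edge r) (H_large_minimal r)"
    using H_large_minimal_subset_not_forcing[OF assms]
    unfolding minimal_skew_forcing_set_def by blast
  show "card (H_large_minimal r) = r + 1"
    unfolding H_large_minimal_def by (simp add: card_cartesian_product)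
qed

lemma Z_minus_bar_H:
  assumes "2 \<le> r"
  shows "Z_minus_bar (H_vertices r) (H_edge r) = r + 1"
  unfolding Z_minus_bar_def
proof (rule Max_eqI)
  have "{S. minimal_skew_forcing_set (H_vertices r) (H_edge r) S} \<subseteq> Pow (H_vertices r)"
    unfolding minimal_skew_forcing_set_def skew_forcing_set_def by auto
  then show "finite (card ` {S. minimal_skew_forcing_set (H_vertices r) (H_edge r) S})"
    by (meson finite_Pow_iff finite_H_vertices finite_imageI finite_subset)
next
  fix y assume "y \<in> card ` {S. minimal_skew_forcing_set (H_vertices r) (H_edge r) S}"
  then show "y \<le> r + 1" using card_minimal_H_forcing_le by blast
next
  show "r + 1 \<in> card ` {S. minimal_skew_forcing_set (H_vertices r) (H_edge r) S}"
    using H_large_minimal[OF assms] by (intro image_eqI[where x = "H_large_minimal r"]) auto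
qed

section \<open>The skew forcing reconfiguration graphs of \<open>H(r)\<close>\<close>

abbreviation H_TAR_path :: "nat \<Rightarrow> nat \<Rightarrow> (nat \<times> nat) set \<Rightarrow> (nat \<times> nat) set \<Rightarrow> bool" where
  "H_TAR_path r k \<equiv> (skew_TAR_adj (H_vertices r) (H_edge r) k)\<^sup>*\<^sup>*"

lemma H_TAR_path_sides:
  assumes "2 \<le> r" "2 * r \<le> k"
  shows "H_TAR_path r k (H_side r 0) (H_side r 1)"
proof -
  define M where "M = H_matched_side r 0 \<union> H_matched_side r 1"
  have matched: "H_forcing r (H_matched_side r i)" "card (H_matched_side r i) = r"
    "H_matched_side r i \<subseteq> H_side r i" "H_side r i \<subseteq> H_vertices r" if "i \<le> 1" for i
    using H_matched_side[OF that] H_side_subset[OF that] by blast+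
  have "M \<subseteq> H_vertices r" unfolding M_def using matched[of 0] matched[of 1] by auto
  moreover have "card M \<le> k"
    unfolding M_def using card_Un_le[of "H_matched_side r 0" "H_matched_side r 1"]
      matched(2)[of 0] matched(2)[of 1] assms(2) by simp
  moreover have "card (H_side r i) \<le> k" for i using assms by simp
  \<comment> \<open>shrink side 0 to its matched part, swap matched parts through their union, grow to side 1\<close>
  ultimately have "H_TAR_path r k (H_matched_side r 0) (H_side r 0)"
    "H_TAR_path r k (H_matched_side r 0) M" "H_TAR_path r k (H_matched_side r 1) M"
    "H_TAR_path r k (H_matched_side r 1) (H_side r 1)"
    using matched[of 0] matched[of 1] unfolding M_def
    by (auto intro!: skew_TAR_path_superset)
  then show ?thesis by (meson rtranclp_trans skew_TAR_path_sym)
qed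

lemma H_TAR_path_one_white:
  assumes "i \<le> 1" "r + 2 \<le> k" "H_forcing r S" "card S \<le> k" "card (H_side r i - S) \<le> 1"
  shows "H_TAR_path r k S (H_side r i)"
proof -
  have "S \<subseteq> H_vertices r" using assms(3) unfolding skew_forcing_set_def by simp
  have "H_side r i - (S \<inter> H_side r i) = H_side r i - S" by blast
  then have "forcing_side r (S \<inter> H_side r i) i" using assms(5) unfolding forcing_side_def by simp
  then have forcing: "H_forcing r (S \<inter> H_side r i)"
    using assms(1) \<open>S \<subseteq> H_vertices r\<close> unfolding H_skew_forcing_iff by blast
  have "H_TAR_path r k (S \<inter> H_side r i) S"
    using forcing \<open>S \<subseteq> H_vertices r\<close> assms(4) by (intro skew_TAR_path_superset) auto
  moreover have "H_TAR_path r k (S \<inter> H_side r i) (H_side r i)"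
    using forcing H_side_subset[OF assms(1)] assms(2) by (intro skew_TAR_path_superset) auto
  ultimately show ?thesis by (meson rtranclp_trans skew_TAR_path_sym)
qed

lemma card_Int_insert_H_side:
  assumes "p \<notin> H_side r i" "card (H_side r i - S) = 2"
  shows "card (S \<inter> insert p (H_side r i)) \<le> r + 1"
proof -
  have "S \<inter> insert p (H_side r i) \<subseteq> insert p (H_side r i) - (H_side r i - S)" by blast
  then have "card (S \<inter> insert p (H_side r i)) \<le> card (insert p (H_side r i) - (H_side r i - S))"
    by (intro card_mono) simp_all
  also have "\<dots> = card (insert p (H_side r i)) - card (H_side r i - S)"
    by (rule card_Diff_subset) auto
  also have "\<dots> = r + 1" using assms by simp
  finally show ?thesis .
qed

lemma H_TAR_path_two_white:
  assumes "i \<le> 1" "r + 2 \<le> k" "H_forcing r S" "card S \<le> k"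
    and two: "card (H_side r i - S) = 2" and x: "x \<in> H_side r i - S"
    and free: "r \<le> snd x \<or> (1 - i, snd x) \<in> S"
  shows "H_TAR_path r k S (H_side r i)"
proof -
  have sub: "S \<subseteq> H_vertices r" using assms(3) unfolding skew_forcing_set_def by simp
  \<comment> \<open>keep only side \<open>i\<close> and the partner of \<open>x\<close>, then make \<open>x\<close> blue\<close>
  define p where "p = (1 - i, snd x)"
  have "1 - i \<noteq> i" using assms(1) by arith
  then have "p \<notin> H_side r i" unfolding p_def H_side_def by auto
  define S' where "S' = S \<inter> insert p (H_side r i)"
  have white: "H_side r i - S' = H_side r i - S" unfolding S'_def by blast
  have "forcing_side r S' i"
    unfolding forcing_side_def white using two x free unfolding S'_def p_def by auto
  moreover have S'_sub: "S' \<subseteq> H_vertices r" using sub unfolding S'_def by blast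
  ultimately have forcing: "H_forcing r S'" using assms(1) unfolding H_skew_forcing_iff by blast
  have "finite S'" using S'_sub by (rule finite_subset) simp
  with card_Int_insert_H_side[OF \<open>p \<notin> H_side r i\<close> two] have "card (insert x S') \<le> k"
    using assms(2) unfolding S'_def by (auto simp: card_insert_if)
  have x_in: "x \<in> H_vertices r" using x H_side_subset[OF assms(1)] by blast
  have "H_side r i - insert x S' = (H_side r i - S) - {x}" using white by blast
  then have "card (H_side r i - insert x S') = 1" using two x by simp
  have "H_TAR_path r k S' S" using forcing sub assms(4) unfolding S'_def
    by (intro skew_TAR_path_superset) auto
  moreover have "H_TAR_path r k S' (insert x S')"
    using forcing S'_sub x_in \<open>card (insert x S') \<le> k\<close> by (intro skew_TAR_path_superset) auto
  moreover have "H_TAR_path r k (insert x S') (H_side r i)"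
    using skew_forcing_set_superset[OF forcing] x_in S'_sub \<open>card (insert x S') \<le> k\<close>
      \<open>card (H_side r i - insert x S') = 1\<close>
    by (intro H_TAR_path_one_white[OF assms(1,2)]) auto
  ultimately show ?thesis by (meson rtranclp_trans skew_TAR_path_sym)
qed

lemma H_TAR_path_to_side:
  assumes "2 \<le> r" "2 * r \<le> k" "H_forcing r S" "card S \<le> k"
  shows "\<exists>i\<le>1. H_TAR_path r k S (H_side r i)"
proof -
  obtain i where i: "i \<le> 1" "forcing_side r S i" using assms(3) H_skew_forcing_iff by blast
  have k: "r + 2 \<le> k" using assms(1,2) by linarith
  have "H_TAR_path r k S (H_side r i)"
  proof (cases "card (H_side r i - S) \<le> 1")
    case True
    then show ?thesis using H_TAR_path_one_white[OF i(1) k assms(3,4)] by blast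
  next
    case False
    with i(2) obtain x where "card (H_side r i - S) = 2" "x \<in> H_side r i - S"
      "r \<le> snd x \<or> (1 - i, snd x) \<in> S"
      unfolding forcing_side_def by auto
    then show ?thesis using H_TAR_path_two_white[OF i(1) k assms(3,4)] by blast
  qed
  with i(1) show ?thesis by blast
qed

lemma H_TAR_connected:
  assumes "2 \<le> r" "2 * r \<le> k"
  shows "skew_TAR_connected (H_vertices r) (H_edge r) k"
proof -
  have to_side0: "H_TAR_path r k S (H_side r 0)"
    if "S \<in> skew_TAR_vertices (H_vertices r) (H_edge r) k" for S
  proof -
    from that have "H_forcing r S" "card S \<le> k" unfolding skew_TAR_vertices_def by auto
    then obtain i where i: "i \<le> 1" "H_TAR_path r k S (H_side r i)"
      using H_TAR_path_to_side[OF assms] by blast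
    consider "i = 0" | "i = 1" using i(1) by arith
    then show ?thesis
    proof cases
      case 2
      from i(2) 2 have "H_TAR_path r k S (H_side r 1)" by simp
      moreover have "H_TAR_path r k (H_side r 1) (H_side r 0)"
        using H_TAR_path_sides[OF assms] by (rule skew_TAR_path_sym)
      ultimately show ?thesis by (rule rtranclp_trans)
    qed (use i(2) in simp)
  qed
  show ?thesis
    unfolding skew_TAR_connected_def
  proof (intro ballI)
    fix S T assume "S \<in> skew_TAR_vertices (H_vertices r) (H_edge r) k"
      "T \<in> skew_TAR_vertices (H_vertices r) (H_edge r) k"
    then have "H_TAR_path r k S (H_side r 0)" "H_TAR_path r k (H_side r 0) T"
      using to_side0 skew_TAR_path_sym by blast+
    then show "H_TAR_path r k S T" by (rule rtranclp_trans)
  qed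
qed

text \<open>A forcing set with at most \<open>2r - 1\<close> vertices leaves at least five vertices white, so at most
  one side can have at most two white vertices; a single token move changes only one side.\<close>
lemma H_TAR_adj_preserves_few_white_side0:
  assumes "2 \<le> r" "skew_TAR_adj (H_vertices r) (H_edge r) (2 * r - 1) S S'"
    "card (H_side r 0 - S) \<le> 2"
  shows "card (H_side r 0 - S') \<le> 2"
proof (rule ccontr)
  assume many0: "\<not> card (H_side r 0 - S') \<le> 2"
  from assms(2) have forcing: "H_forcing r S" "H_forcing r S'" and "card S \<le> 2 * r - 1"
    and "card (sym_diff S S') = 1"
    unfolding skew_TAR_adj_def skew_TAR_vertices_def by auto
  then obtain v where v: "sym_diff S S' = {v}" by (meson card_1_singletonE)
  obtain i where i: "i \<le> 1" "forcing_side r S' i" using forcing(2) H_skew_forcing_iff by blast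
  have "i = 1" using i many0 unfolding forcing_side_def by (cases i) auto
  then have few1: "card (H_side r 1 - S') \<le> 2" using i(2) unfolding forcing_side_def by auto
  show False
  proof (cases "v \<in> H_side r 0")
    case False
    have "H_side r 0 - S = H_side r 0 - S'"
      using v False by (rule sym_diff_singleton_Diff_eq)
    then show False using assms(3) many0 by simp
  next
    case True
    then have "v \<notin> H_side r 1" using H_side_disjoint[of 0 1 r] by auto
    with v have "H_side r 1 - S = H_side r 1 - S'" by (rule sym_diff_singleton_Diff_eq)
    then have "card (H_vertices r - S) \<le> 4"
      using card_H_white[of 0 r S] assms(3) few1 by simp
    moreover have "S \<subseteq> H_vertices r" using forcing(1) unfolding skew_forcing_set_def by simp
    ultimately show False
      using card_H_blue_white[of S r] \<open>card S \<le> 2 * r - 1\<close> assms(1) by linarith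
  qed
qed

lemma H_TAR_disconnected:
  assumes "2 \<le> r"
  shows "\<not> skew_TAR_connected (H_vertices r) (H_edge r) (2 * r - 1)"
proof
  assume "skew_TAR_connected (H_vertices r) (H_edge r) (2 * r - 1)"
  moreover have "H_matched_side r i \<in> skew_TAR_vertices (H_vertices r) (H_edge r) (2 * r - 1)"
    if "i \<le> 1" for i
    using H_matched_side[OF that] assms unfolding skew_TAR_vertices_def by simp
  ultimately have path: "H_TAR_path r (2 * r - 1) (H_matched_side r 0) (H_matched_side r 1)"
    unfolding skew_TAR_connected_def by simp
  have "card (H_side r 0 - T) \<le> 2" if "H_TAR_path r (2 * r - 1) (H_matched_side r 0) T" for T
    using that
  proof (induction rule: rtranclp_induct)
    case base
    show ?case using H_matched_side(4)[of 0 r] by simp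
  next
    case (step T T')
    then show ?case using H_TAR_adj_preserves_few_white_side0[OF assms] by blast
  qed
  from this[OF path] have "card (H_side r 0 - H_matched_side r 1) \<le> 2" .
  moreover have "H_side r 0 - H_matched_side r 1 = H_side r 0"
    using H_matched_side(3)[of 1 r] H_side_disjoint[of 0 1 r] by auto
  ultimately show False using assms by simp
qed

lemma z_minus_0_H:
  assumes "2 \<le> r"
  shows "z_minus_0 (H_vertices r) (H_edge r) = 2 * r"
  unfolding z_minus_0_def
proof (rule Least_equality)
  show "\<forall>k\<ge>2 * r. skew_TAR_connected (H_vertices r) (H_edge r) k"
    using H_TAR_connected[OF assms] by blast
next
  fix k0 assume connected: "\<forall>k\<ge>k0. skew_TAR_connected (H_vertices r) (H_edge r) k"
  show "2 * r \<le> k0"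
  proof (rule ccontr)
    assume "\<not> 2 * r \<le> k0"
    then have "k0 \<le> 2 * r - 1" by simp
    with connected H_TAR_disconnected[OF assms] show False by blast
  qed
qed

theorem proposition5p8:
  fixes r :: nat
  assumes "r \<ge> 2"
  shows "Z_minus (H_vertices r) (H_edge r) = r
       \<and> Z_minus_bar (H_vertices r) (H_edge r) = r + 1
       \<and> z_minus_0 (H_vertices r) (H_edge r) = 2 * r
       \<and> 2 * r = Z_minus_bar (H_vertices r) (H_edge r) + r - 1"
  using Z_minus_H[of r] Z_minus_bar_H[OF assms] z_minus_0_H[OF assms] by simp

end
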